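(* Let $\theta>0$ and $\tilde D_n=\sum_{j=2}^n(\tilde C_j(n)-1)_+$, where $(x)_+=\max(0,x)$. Then, as $n\to\infty$, $$\mathbb{P}(\tilde D_n=0)\to\prod_{j\ge2}e^{-\theta/j}\Big(1+\frac{\theta}{j}\Big)=\frac{e^{-\theta(\gamma-1)}}{\Gamma(\theta+2)},$$ where $\gamma$ is Euler's constant. That is, the probability that a $\theta$-biased random derangement of $\{1,\ldots,n\}$ has all cycle lengths distinct converges to $e^{-\theta(\gamma-1)}/\Gamma(\theta+2)$.
   Context: Fix $\theta>0$. Write $\theta_{(m)}=\theta(\theta+1)\cdots(\theta+m-1)$. $\mathrm{ESF}(\theta)$ is the law of $(C_1(n),\ldots,C_n(n))$ with $\mathbb{P}(C_j(n)=c_j,\,1\le j\le n)=\frac{n!}{\theta_{(n)}}\prod_{j=1}^n(\theta/j)^{c_j}/c_j!$ whenever $\sum_j jc_j=n$ (cycle counts of a random permutation chosen with probability $\theta^k/\theta_{(n)}$ when it has $k$ cycles). The derangement cycle counts $(\tilde C_2(n),\ldots,\tilde C_n(n))$ have the law of $(C_2(n),\ldots,C_n(n))$ conditioned on $C_1(n)=0$. *)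

theory Defs
  imports "HOL-Analysis.Analysis"
begin

text \<open>Cycle-count vectors of size n: c j is the number of j-cycles; c j = 0 outside 1..n
  and the weighted sum is n.\<close>
definition cyc_vecs :: "nat \<Rightarrow> (nat \<Rightarrow> nat) set" where
  "cyc_vecs n = {c. (\<forall>j. c j \<noteq> 0 \<longrightarrow> j \<in> {1..n}) \<and> (\<Sum>j=1..n. j * c j) = n}"

text \<open>Ewens sampling formula ESF(theta) probability of the count vector c.\<close>
definition esf_prob :: "real \<Rightarrow> nat \<Rightarrow> (nat \<Rightarrow> nat) \<Rightarrow> real" where
  "esf_prob \<theta> n c = fact n / pochhammer \<theta> n *
     (\<Prod>j=1..n. (\<theta> / real j) ^ (c j) / fact (c j))"

definition esf_event :: "real \<Rightarrow> nat \<Rightarrow> ((nat \<Rightarrow> nat) \<Rightarrow> bool) \<Rightarrow> real" where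
  "esf_event \<theta> n P = (\<Sum>c\<in>{c\<in>cyc_vecs n. P c}. esf_prob \<theta> n c)"

text \<open>Law of the derangement cycle counts: ESF(theta) conditioned on C_1(n) = 0.\<close>
definition derange_prob :: "real \<Rightarrow> nat \<Rightarrow> ((nat \<Rightarrow> nat) \<Rightarrow> bool) \<Rightarrow> real" where
  "derange_prob \<theta> n P =
     esf_event \<theta> n (\<lambda>c. c 1 = 0 \<and> P c) / esf_event \<theta> n (\<lambda>c. c 1 = 0)"

text \<open>D tilde: sum over j=2..n of (c j - 1)_+ (truncated nat subtraction is the positive part).\<close>
definition D_tilde :: "nat \<Rightarrow> (nat \<Rightarrow> nat) \<Rightarrow> nat" where
  "D_tilde n c = (\<Sum>j=2..n. c j - 1)"

end

theory Submission
  imports Defs "HOL-Computational_Algebra.Formal_Power_Series"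
begin

unbundle no vec_syntax
notation fps_nth (infixl "$" 75)

text \<open>
  By the Ewens sampling formula, the weight of the count vectors with \<open>c 1 = 0\<close> and
  \<open>c j \<le> 1\<close> for \<open>2 \<le> j \<le> M\<close> is the \<open>n\<close>-th coefficient of
  \<open>\<Prod>j\<le>M. h\<^sub>j(X\<^sup>j) * \<Prod>M<j\<le>n. exp (t X\<^sup>j / j)\<close>, where \<open>h\<^sub>1 = 1\<close> and
  \<open>h\<^sub>j(z) = 1 + t z / j\<close> for \<open>j \<ge> 2\<close>. This product is \<open>g\<^sub>M * E\<^sub>n\<close> with
  \<open>g\<^sub>M = \<Prod>j\<le>M. h\<^sub>j(X\<^sup>j) exp (- t X\<^sup>j / j)\<close> and \<open>E\<^sub>n\<close> a truncation of
  \<open>(1 - X) powr -t\<close>, whose coefficients \<open>a\<^sub>m = pochhammer t m / m!\<close> vary regularly.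
  Hence \<open>[X\<^sup>n] (g\<^sub>M * E\<^sub>n) / a\<^sub>n\<close> tends to
  \<open>g\<^sub>M(1) = exp (-t) \<Prod>2\<le>j\<le>M. exp (- t / j) (1 + t / j)\<close>.
  The derangement probability is the quotient of the cases \<open>M = n\<close> and \<open>M = 1\<close>. To pass from
  a fixed \<open>M\<close> to \<open>M = n\<close>, the cycle lengths \<open>k > M\<close> occurring at least twice are
  bounded coefficientwise by \<open>\<Sum>k>M. (t / k)\<^sup>2 / 2 X\<^sup>2\<^sup>k E\<^sub>n\<close>, which costs
  \<open>O(t\<^sup>2 / M + 1 / n)\<close> relative to \<open>a\<^sub>n\<close>. The infinite product is identified with
  \<open>exp (- t (\<gamma> - 1)) / \<Gamma>(t + 2)\<close> by Weierstrass' product for \<open>\<Gamma>\<close>.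
\<close>

section \<open>Count vectors and spread power series\<close>

definition fps_spread :: "nat \<Rightarrow> (nat \<Rightarrow> 'a::zero) \<Rightarrow> 'a fps" where
  "fps_spread j f = Abs_fps (\<lambda>m. if j dvd m then f (m div j) else 0)"

lemma fps_spread_nth: "fps_spread j f $ m = (if j dvd m then f (m div j) else 0)"
  by (simp add: fps_spread_def)

lemma fps_spread_eq_compose:
  fixes f :: "nat \<Rightarrow> 'a::comm_semiring_1"
  assumes "j \<ge> 1"
  shows "fps_spread j f = Abs_fps f oo fps_X ^ j"
proof (rule fps_ext)
  fix m
  have "(Abs_fps f oo fps_X ^ j) $ m = (\<Sum>i=0..m. f i * (if m = j * i then 1 else 0))"
    by (simp add: fps_compose_nth power_mult[symmetric])
  also have "\<dots> = (if j dvd m then f (m div j) else 0)"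
  proof (cases "j dvd m")
    case True
    then obtain r where m: "m = j * r" by blast
    have "(\<Sum>i=0..m. f i * (if m = j * i then 1 else 0)) = (\<Sum>i=0..m. if i = r then f r else 0)"
      using assms m by (intro sum.cong) auto
    also have "\<dots> = f (m div j)" using assms m by simp
    finally show ?thesis using True by simp
  next
    case False
    then have "m \<noteq> j * i" for i by auto
    then show ?thesis using False by simp
  qed
  finally show "fps_spread j f $ m = (Abs_fps f oo fps_X ^ j) $ m"
    by (simp add: fps_spread_nth)
qed

definition count_vecs :: "nat \<Rightarrow> nat \<Rightarrow> (nat \<Rightarrow> nat) set" where
  "count_vecs N n = {c. (\<forall>j. c j \<noteq> 0 \<longrightarrow> j \<in> {1..N}) \<and> (\<Sum>j=1..N. j * c j) = n}"

lemma cyc_vecs_eq_count_vecs: "cyc_vecs n = count_vecs n n"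
  by (simp add: cyc_vecs_def count_vecs_def)

lemma finite_count_vecs [simp]: "finite (count_vecs N n)"
proof (rule finite_subset)
  show "count_vecs N n \<subseteq> {c. \<forall>x. (x \<in> {1..N} \<longrightarrow> c x \<in> {0..n}) \<and> (x \<notin> {1..N} \<longrightarrow> c x = 0)}"
  proof (safe)
    fix c x assume c: "c \<in> count_vecs N n" and x: "x \<in> {1..N}"
    have "c x \<le> x * c x" using x by auto
    also have "x * c x \<le> (\<Sum>j=1..N. j * c j)" using x by (intro member_le_sum) auto
    also have "\<dots> = n" using c by (simp add: count_vecs_def)
    finally show "c x \<in> {0..n}" by simp
  next
    fix c x assume "c \<in> count_vecs N n" "x \<notin> {1..N}"
    then show "c x = 0" by (auto simp: count_vecs_def)
  qed
  show "finite {c. \<forall>x. (x \<in> {1..N} \<longrightarrow> c x \<in> {0..n}) \<and> (x \<notin> {1..N} \<longrightarrow> c x = (0::nat))}"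
    by (rule finite_set_of_finite_funs) auto
qed

lemma count_vecs_0: "count_vecs 0 n = (if n = 0 then {\<lambda>_. 0} else {})"
  by (auto simp: count_vecs_def)

lemma count_vecs_Suc_iff:
  fixes N n :: nat
  defines "K \<equiv> Suc N"
  shows "c \<in> count_vecs K n \<longleftrightarrow> K * c K \<le> n \<and> c(K := 0) \<in> count_vecs N (n - K * c K)"
proof -
  have "(\<Sum>j=1..K. j * c j) = (\<Sum>j=1..N. j * (c(K := 0)) j) + K * c K"
    by (auto simp: K_def intro!: sum.cong)
  moreover have "(\<forall>j. c j \<noteq> 0 \<longrightarrow> j \<in> {1..K}) \<longleftrightarrow> (\<forall>j. (c(K := 0)) j \<noteq> 0 \<longrightarrow> j \<in> {1..N})"
    by (auto simp: K_def le_Suc_eq) (metis Suc_leI zero_less_Suc)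
  ultimately show ?thesis by (auto simp: count_vecs_def)
qed

lemma bij_betw_count_vecs_Suc:
  fixes N n :: nat
  defines "K \<equiv> Suc N"
  shows "bij_betw (\<lambda>c. (n - K * c K, c(K := 0))) (count_vecs K n)
           (SIGMA i:{i\<in>{0..n}. K dvd (n - i)}. count_vecs N i)"
proof (rule bij_betw_byWitness[where f' = "\<lambda>(i, c). c(K := (n - i) div K)"])
  note count_vecs_Suc_iff[where N = N, folded K_def, simp]
  have K_div: "K * x div K = x" for x
    unfolding K_def by (rule nonzero_mult_div_cancel_left) simp
  have zero: "c K = 0" if "c \<in> count_vecs N i" for c i
    using that by (auto simp: count_vecs_def K_def)
  show "\<forall>c\<in>count_vecs K n. (\<lambda>(i, c). c(K := (n - i) div K)) (n - K * c K, c(K := 0)) = c"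
    by (auto simp: K_div)
  show "\<forall>p\<in>(SIGMA i:{i\<in>{0..n}. K dvd (n - i)}. count_vecs N i).
          (\<lambda>c. (n - K * c K, c(K := 0))) ((\<lambda>(i, c). c(K := (n - i) div K)) p) = p"
    by (auto simp: zero)
  show "(\<lambda>c. (n - K * c K, c(K := 0))) ` count_vecs K n \<subseteq> (SIGMA i:{i\<in>{0..n}. K dvd (n - i)}. count_vecs N i)"
    by auto
  show "(\<lambda>(i, c). c(K := (n - i) div K)) ` (SIGMA i:{i\<in>{0..n}. K dvd (n - i)}. count_vecs N i)
          \<subseteq> count_vecs K n"
    by (auto simp: zero fun_upd_idem)
qed

lemma sum_count_vecs_prod:
  fixes f :: "nat \<Rightarrow> nat \<Rightarrow> 'a::comm_semiring_1"
  shows "(\<Sum>c\<in>count_vecs N n. \<Prod>j=1..N. f j (c j)) = (\<Prod>j=1..N. fps_spread j (f j)) $ n"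
proof (induction N arbitrary: n)
  case 0
  then show ?case by (simp add: count_vecs_0)
next
  case (Suc N)
  define K where "K = Suc N"
  define I where "I = {i\<in>{0..n}. K dvd (n - i)}"
  define P where "P = (\<lambda>c. \<Prod>j=1..N. f j (c j))"
  have bij: "bij_betw (\<lambda>c. (n - K * c K, c(K := 0))) (count_vecs K n) (Sigma I (count_vecs N))"
    unfolding K_def I_def by (rule bij_betw_count_vecs_Suc)
  have K_div: "K * x div K = x" for x
    unfolding K_def by (rule nonzero_mult_div_cancel_left) simp
  have "(\<Prod>j=1..K. fps_spread j (f j)) $ n = ((\<Prod>j=1..N. fps_spread j (f j)) * fps_spread K (f K)) $ n"
    by (simp add: K_def)
  also have "\<dots> = (\<Sum>i=0..n. (\<Sum>c\<in>count_vecs N i. P c) * (if K dvd (n - i) then f K ((n - i) div K) else 0))"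
    unfolding fps_mult_nth Suc.IH[symmetric] fps_spread_nth P_def ..
  also have "\<dots> = (\<Sum>i\<in>I. \<Sum>c\<in>count_vecs N i. P c * f K ((n - i) div K))"
    unfolding I_def by (subst sum.inter_filter) (auto simp: sum_distrib_right intro!: sum.cong)
  also have "\<dots> = (\<Sum>(i, c)\<in>Sigma I (count_vecs N). P c * f K ((n - i) div K))"
    by (subst sum.Sigma) (auto simp: I_def)
  also have "\<dots> = (\<Sum>c\<in>count_vecs K n. P (c(K := 0)) * f K ((n - (n - K * c K)) div K))"
    using sum.reindex_bij_betw[OF bij, of "\<lambda>(i, c). P c * f K ((n - i) div K)"] by simp
  also have "\<dots> = (\<Sum>c\<in>count_vecs K n. \<Prod>j=1..K. f j (c j))"
  proof (intro sum.cong refl)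
    fix c assume "c \<in> count_vecs K n"
    then have "n - (n - K * c K) = K * c K" by (auto simp: count_vecs_def K_def)
    then have "(n - (n - K * c K)) div K = c K" by (simp only: K_div)
    moreover have "P (c(K := 0)) = P c" by (auto simp: P_def K_def intro!: prod.cong)
    ultimately show "P (c(K := 0)) * f K ((n - (n - K * c K)) div K) = (\<Prod>j=1..K. f j (c j))"
      by (simp add: P_def K_def)
  qed
  finally show ?case by (simp add: K_def)
qed

section \<open>The Ewens series\<close>

definition cycle_weight :: "real \<Rightarrow> nat \<Rightarrow> nat \<Rightarrow> real" where
  "cycle_weight t j r = (t / real j) ^ r / fact r"

lemma fps_spread_cycle_weight:
  assumes "j \<ge> 1"
  shows "fps_spread j (cycle_weight t j) = fps_exp (t / real j) oo fps_X ^ j"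
  using assms by (simp add: fps_spread_eq_compose cycle_weight_def [abs_def] fps_exp_def)

lemma fps_spread_cycle_weight_mult_neg:
  assumes "j \<ge> 1"
  shows "fps_spread j (cycle_weight t j) * fps_spread j (cycle_weight (- t) j) = 1"
proof -
  have "(fps_X ^ j :: real fps) $ 0 = 0" using assms by simp
  then have "fps_spread j (cycle_weight t j) * fps_spread j (cycle_weight (- t) j)
      = (fps_exp (t / real j) * fps_exp (- t / real j)) oo fps_X ^ j"
    using assms by (simp add: fps_spread_cycle_weight fps_compose_mult_distrib)
  also have "fps_exp (t / real j) * fps_exp (- t / real j) = 1"
    by (simp flip: fps_exp_add_mult)
  finally show ?thesis by simp
qed

lemma fps_deriv_spread_cycle_weight:
  assumes "j \<ge> 1"
  shows "fps_deriv (fps_spread j (cycle_weight t j))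
           = fps_const t * fps_X ^ (j - 1) * fps_spread j (cycle_weight t j)"
proof -
  have "(fps_X ^ j :: real fps) $ 0 = 0" using assms by simp
  then have "fps_deriv (fps_spread j (cycle_weight t j))
      = (fps_const (t / real j) * fps_exp (t / real j) oo fps_X ^ j) * (fps_const (real j) * fps_X ^ (j - 1))"
    using assms by (simp add: fps_spread_cycle_weight fps_compose_deriv fps_deriv_power)
  also have "\<dots> = fps_const (t / real j * real j) * fps_X ^ (j - 1) * (fps_exp (t / real j) oo fps_X ^ j)"
    by (simp flip: fps_const_mult_apply_left fps_const_mult add: algebra_simps)
  finally show ?thesis using assms by (simp add: fps_spread_cycle_weight)
qed

definition ewens_fps :: "real \<Rightarrow> nat \<Rightarrow> real fps" where
  "ewens_fps t N = (\<Prod>j=1..N. fps_spread j (cycle_weight t j))"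

definition rising_coeff :: "real \<Rightarrow> nat \<Rightarrow> real" where
  "rising_coeff t n = pochhammer t n / fact n"

lemma fps_deriv_ewens_fps:
  "fps_deriv (ewens_fps t N) = fps_const t * (\<Sum>j<N. fps_X ^ j) * ewens_fps t N"
proof (induction N)
  case (Suc N)
  have "ewens_fps t (Suc N) = ewens_fps t N * fps_spread (Suc N) (cycle_weight t (Suc N))"
    by (simp add: ewens_fps_def)
  then show ?case
    using Suc.IH fps_deriv_spread_cycle_weight[of "Suc N" t] by (simp add: algebra_simps)
qed (simp add: ewens_fps_def)

lemma ewens_fps_nth_0: "ewens_fps t N $ 0 = 1"
  by (induction N) (simp_all add: ewens_fps_def fps_spread_nth cycle_weight_def)

lemma ewens_fps_nth_Suc:
  assumes "n < N"
  shows "real (Suc n) * ewens_fps t N $ Suc n = t * (\<Sum>m=0..n. ewens_fps t N $ m)"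
proof -
  have "real (Suc n) * ewens_fps t N $ Suc n = fps_deriv (ewens_fps t N) $ n"
    by simp
  also have "\<dots> = t * (\<Sum>j<N. if n < j then 0 else ewens_fps t N $ (n - j))"
    by (simp add: fps_deriv_ewens_fps mult.assoc sum_distrib_right fps_sum_nth fps_X_power_mult_nth)
  also have "(\<Sum>j<N. if n < j then 0 else ewens_fps t N $ (n - j)) = (\<Sum>j<Suc n. ewens_fps t N $ (n - j))"
    using assms by (intro sum.mono_neutral_cong_right) auto
  also have "\<dots> = (\<Sum>m=0..n. ewens_fps t N $ m)"
    using sum.nat_diff_reindex[of "\<lambda>m. ewens_fps t N $ m" "Suc n"]
    by (simp add: atLeast0AtMost lessThan_Suc_atMost)
  finally show ?thesis .
qed

lemma rising_coeff_0 [simp]: "rising_coeff t 0 = 1"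
  by (simp add: rising_coeff_def)

lemma rising_coeff_Suc: "rising_coeff t (Suc n) = rising_coeff t n * (t + real n) / real (Suc n)"
  by (simp add: rising_coeff_def pochhammer_rec' field_simps)

lemma rising_coeff_sum: "t * (\<Sum>m=0..n. rising_coeff t m) = real (Suc n) * rising_coeff t (Suc n)"
proof (induction n)
  case (Suc n)
  have "t * (\<Sum>m=0..Suc n. rising_coeff t m) = rising_coeff t (Suc n) * (t + real (Suc n))"
    using Suc.IH by (simp add: algebra_simps)
  then show ?case by (simp add: rising_coeff_Suc[of t "Suc n"])
qed (simp add: rising_coeff_Suc)

text \<open>Both sides obey the recurrence of the coefficients of \<open>(1 - X) powr -t\<close>, whose
  logarithmic derivative \<open>t / (1 - X)\<close> agrees with that of \<open>ewens_fps t N\<close> below degree \<open>N\<close>.\<close>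
lemma ewens_fps_nth:
  assumes "n \<le> N"
  shows "ewens_fps t N $ n = rising_coeff t n"
  using assms
proof (induction n rule: less_induct)
  case (less n)
  show ?case
  proof (cases n)
    case (Suc k)
    have "real (Suc k) * ewens_fps t N $ Suc k = t * (\<Sum>m=0..k. ewens_fps t N $ m)"
      using less.prems Suc by (intro ewens_fps_nth_Suc) auto
    also have "\<dots> = t * (\<Sum>m=0..k. rising_coeff t m)"
      using less Suc by (intro arg_cong[where f = "(*) t"] sum.cong) auto
    also have "\<dots> = real (Suc k) * rising_coeff t (Suc k)" by (rule rising_coeff_sum)
    finally show ?thesis using Suc by simp
  qed (simp add: ewens_fps_nth_0)
qed

section \<open>Asymptotics of the rising coefficients\<close>

lemma rising_coeff_pos: "t > 0 \<Longrightarrow> rising_coeff t n > 0"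
  by (simp add: rising_coeff_def pochhammer_pos)

lemma rising_coeff_weighted_mono:
  assumes "t > 0" "m \<le> n"
  shows "real m * rising_coeff t m \<le> real n * rising_coeff t n"
proof (rule lift_Suc_mono_le[OF _ assms(2)])
  fix k
  have "real k * rising_coeff t k \<le> rising_coeff t k * (t + real k)"
    using assms(1) rising_coeff_pos[OF assms(1), of k] by (simp add: algebra_simps)
  also have "\<dots> = real (Suc k) * rising_coeff t (Suc k)"
    by (simp add: rising_coeff_Suc)
  finally show "real k * rising_coeff t k \<le> real (Suc k) * rising_coeff t (Suc k)" .
qed

lemma rising_coeff_le_scaled:
  assumes t: "t > 0" and mn: "m \<le> n"
  shows "rising_coeff t m \<le> (real (n - m) + 1) * (1 + 1 / t) * rising_coeff t n"
proof -
  define b where "b = (real (n - m) + 1) * rising_coeff t n"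
  have b: "b \<ge> 0" using rising_coeff_pos[OF t, of n] by (simp add: b_def)
  have "rising_coeff t m \<le> b + b / t"
  proof (cases "m = 0")
    case True
    show ?thesis
    proof (cases "n = 0")
      case False
      have "t = real 1 * rising_coeff t 1" by (simp add: rising_coeff_Suc)
      also have "\<dots> \<le> real n * rising_coeff t n"
        using False t by (intro rising_coeff_weighted_mono) auto
      also have "\<dots> \<le> b" using True rising_coeff_pos[OF t, of n] by (simp add: b_def)
      finally have "1 \<le> b / t" using t by simp
      then show ?thesis using True b by simp
    qed (use True t in \<open>simp add: b_def\<close>)
  next
    case False
    have "real m * rising_coeff t m \<le> real n * rising_coeff t n"
      using t mn by (rule rising_coeff_weighted_mono)
    also have "real n \<le> (real (n - m) + 1) * real m"
    proof -
      have "real n = real (n - m) + real m" using mn by simp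
      also have "\<dots> \<le> real (n - m) * real m + real m"
        using False mult_left_mono[of 1 "real m" "real (n - m)"] by simp
      finally show ?thesis by (simp add: algebra_simps)
    qed
    then have "real n * rising_coeff t n \<le> real m * b"
      using rising_coeff_pos[OF t, of n] by (simp add: b_def mult_right_mono mult_ac)
    finally have "rising_coeff t m \<le> b" using False by simp
    then show ?thesis using b t by (simp add: add_increasing2)
  qed
  then show ?thesis by (simp add: b_def algebra_simps add_divide_distrib)
qed

lemma rising_coeff_le_twice:
  assumes t: "t > 0" and "m \<le> n" "n \<le> 2 * m"
  shows "rising_coeff t m \<le> 2 * rising_coeff t n"
proof (cases "m = 0")
  case False
  have "real m * rising_coeff t m \<le> real n * rising_coeff t n"
    using t assms(2) by (rule rising_coeff_weighted_mono)
  also have "\<dots> \<le> (2 * real m) * rising_coeff t n"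
    using assms rising_coeff_pos[OF t, of n] by (intro mult_right_mono) auto
  finally show ?thesis using False by simp
qed (use assms rising_coeff_pos[OF t, of 0] in simp)

lemma sum_rising_coeff:
  assumes "t > 0"
  shows "(\<Sum>m=0..n. rising_coeff t m) = rising_coeff t n * (t + real n) / t"
proof -
  have "t * (\<Sum>m=0..n. rising_coeff t m) = rising_coeff t n * (t + real n)"
    unfolding rising_coeff_sum rising_coeff_Suc by simp
  then show ?thesis using assms by (simp add: field_simps)
qed

lemma rising_coeff_ratio_Suc_limit:
  assumes t: "t > 0"
  shows "(\<lambda>n. rising_coeff t n / rising_coeff t (Suc n)) \<longlonglongrightarrow> 1"
proof -
  have "rising_coeff t n / rising_coeff t (Suc n) = 1 / (1 + (t - 1) * (1 / real (Suc n)))" for n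
  proof -
    have "rising_coeff t n / rising_coeff t (Suc n) = real (Suc n) / (t + real n)"
      using t rising_coeff_pos[OF t, of n] by (simp add: rising_coeff_Suc)
    also have "\<dots> = 1 / (1 + (t - 1) * (1 / real (Suc n)))"
      using t by (simp add: field_simps)
    finally show ?thesis .
  qed
  moreover have "(\<lambda>n. 1 / (1 + (t - 1) * (1 / real (Suc n)))) \<longlonglongrightarrow> 1 / (1 + (t - 1) * 0)"
    using LIMSEQ_Suc[OF lim_1_over_n] by (intro tendsto_intros) auto
  ultimately show ?thesis by simp
qed

lemma rising_coeff_ratio_limit:
  assumes t: "t > 0"
  shows "(\<lambda>n. rising_coeff t (n - k) / rising_coeff t n) \<longlonglongrightarrow> 1"
proof -
  have nz: "rising_coeff t n \<noteq> 0" for n using rising_coeff_pos[OF t, of n] by simp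
  have "(\<lambda>n. rising_coeff t n / rising_coeff t (n + k)) \<longlonglongrightarrow> 1"
  proof (induction k)
    case 0
    have "rising_coeff t n / rising_coeff t (n + 0) = 1" for n using nz[of n] by simp
    then show ?case by simp
  next
    case (Suc k)
    have "(\<lambda>n. rising_coeff t (n + k) / rising_coeff t (Suc (n + k))) \<longlonglongrightarrow> 1"
      using LIMSEQ_ignore_initial_segment[OF rising_coeff_ratio_Suc_limit[OF t], of k] by simp
    with Suc.IH have "(\<lambda>n. rising_coeff t n / rising_coeff t (n + k) *
        (rising_coeff t (n + k) / rising_coeff t (Suc (n + k)))) \<longlonglongrightarrow> 1 * 1"
      by (rule tendsto_mult)
    moreover have "rising_coeff t n / rising_coeff t (n + k) *
        (rising_coeff t (n + k) / rising_coeff t (Suc (n + k))) = rising_coeff t n / rising_coeff t (n + Suc k)" for n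
      using nz[of "n + k"] by simp
    ultimately show ?case by (simp only: mult_1)
  qed
  then have "(\<lambda>n. rising_coeff t (n + k - k) / rising_coeff t (n + k)) \<longlonglongrightarrow> 1" by simp
  then show ?thesis by (rule LIMSEQ_offset)
qed

section \<open>Weighted summable power series\<close>

definition weighted_summable :: "real fps \<Rightarrow> bool" where
  "weighted_summable p \<longleftrightarrow> summable (\<lambda>i. \<bar>p $ i\<bar> * (real i + 1))"

lemma weighted_summable_imp_summable_norm:
  assumes "weighted_summable p"
  shows "summable (\<lambda>i. norm (p $ i))"
  using assms unfolding weighted_summable_def
  by (rule summable_comparison_test[rotated]) (auto intro!: exI[of _ 0] simp: mult_le_cancel_left1)

lemma weighted_summable_mult:
  assumes p: "weighted_summable p" and q: "weighted_summable q"
  shows "weighted_summable (p * q)"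
proof -
  define u where "u = (\<lambda>i. \<bar>p $ i\<bar> * (real i + 1))"
  define v where "v = (\<lambda>i. \<bar>q $ i\<bar> * (real i + 1))"
  have "summable (\<lambda>i. norm (u i))" "summable (\<lambda>i. norm (v i))"
    using p q by (simp_all add: weighted_summable_def u_def v_def)
  then have Cauchy: "summable (\<lambda>k. \<Sum>i\<le>k. u i * v (k - i))"
    by (rule summable_Cauchy_product)
  have bound: "\<bar>(p * q) $ k\<bar> * (real k + 1) \<le> (\<Sum>i\<le>k. u i * v (k - i))" for k
  proof -
    have "\<bar>(p * q) $ k\<bar> = \<bar>\<Sum>i\<le>k. p $ i * q $ (k - i)\<bar>"
      by (simp add: fps_mult_nth atLeast0AtMost)
    also have "\<dots> \<le> (\<Sum>i\<le>k. \<bar>p $ i\<bar> * \<bar>q $ (k - i)\<bar>)"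
      unfolding abs_mult[symmetric] by (rule sum_abs)
    finally have "\<bar>(p * q) $ k\<bar> * (real k + 1) \<le> (\<Sum>i\<le>k. \<bar>p $ i\<bar> * \<bar>q $ (k - i)\<bar>) * (real k + 1)"
      by (rule mult_right_mono) simp
    also have "\<dots> \<le> (\<Sum>i\<le>k. u i * v (k - i))"
      unfolding sum_distrib_right
    proof (intro sum_mono)
      fix i assume "i \<in> {..k}"
      then have "real i * real i \<le> real i * real k" by (intro mult_left_mono) auto
      with \<open>i \<in> {..k}\<close> have "real k + 1 \<le> (real i + 1) * (real (k - i) + 1)"
        by (simp add: algebra_simps)
      then have "\<bar>p $ i\<bar> * \<bar>q $ (k - i)\<bar> * (real k + 1)
          \<le> \<bar>p $ i\<bar> * \<bar>q $ (k - i)\<bar> * ((real i + 1) * (real (k - i) + 1))"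
        by (intro mult_left_mono) auto
      then show "\<bar>p $ i\<bar> * \<bar>q $ (k - i)\<bar> * (real k + 1) \<le> u i * v (k - i)"
        by (simp add: u_def v_def mult_ac)
    qed
    finally show ?thesis .
  qed
  show ?thesis unfolding weighted_summable_def
    by (rule summable_comparison_test[OF _ Cauchy]) (auto intro!: exI[of _ 0] bound)
qed

lemma weighted_summable_sums_mult:
  assumes "weighted_summable p" "(\<lambda>i. p $ i) sums a" "weighted_summable q" "(\<lambda>i. q $ i) sums b"
  shows "(\<lambda>i. (p * q) $ i) sums (a * b)"
  using Cauchy_product_sums[OF assms(1,3)[THEN weighted_summable_imp_summable_norm]]
    sums_unique[OF assms(2)] sums_unique[OF assms(4)]
  by (simp add: fps_mult_nth atLeast0AtMost)

lemma weighted_summable_prod: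
  assumes "finite A" and "\<And>j. j \<in> A \<Longrightarrow> weighted_summable (F j) \<and> (\<lambda>i. F j $ i) sums s j"
  shows "weighted_summable (\<Prod>j\<in>A. F j) \<and> (\<lambda>i. (\<Prod>j\<in>A. F j) $ i) sums (\<Prod>j\<in>A. s j)"
  using assms
proof (induction A rule: finite_induct)
  case empty
  have "(\<lambda>i. (1 :: real fps) $ i) sums 1"
    using sums_finite[of "{0}" "\<lambda>i. (1 :: real fps) $ i"] by simp
  moreover have "summable (\<lambda>i. \<bar>(1 :: real fps) $ i\<bar> * (real i + 1))"
    by (rule summable_finite[of "{0}"]) auto
  ultimately show ?case by (simp add: weighted_summable_def)
next
  case (insert j A)
  then have IH: "weighted_summable (\<Prod>j\<in>A. F j)" "(\<lambda>i. (\<Prod>j\<in>A. F j) $ i) sums (\<Prod>j\<in>A. s j)"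
    and F: "weighted_summable (F j)" "(\<lambda>i. F j $ i) sums s j" by auto
  show ?case
    using weighted_summable_mult[OF F(1) IH(1)] weighted_summable_sums_mult[OF F(1,2) IH(1,2)]
    by (simp add: insert.hyps)
qed

lemma weighted_summable_fps_spread:
  assumes j: "j \<ge> 1" and f: "summable (\<lambda>r. \<bar>f r\<bar> * (real j * real r + 1))"
  shows "weighted_summable (fps_spread j f) \<and> (\<lambda>i. fps_spread j f $ i) sums (\<Sum>r. f r)"
proof
  have mono: "strict_mono (\<lambda>r. j * r)" using j by (auto simp: strict_mono_def)
  have off: "fps_spread j f $ i = 0" if "i \<notin> range (\<lambda>r. j * r)" for i
    using that by (auto simp: fps_spread_nth elim!: dvdE)
  have on: "fps_spread j f $ (j * r) = f r" for r using j by (simp add: fps_spread_nth)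
  have "(\<lambda>r. \<bar>fps_spread j f $ (j * r)\<bar> * (real (j * r) + 1)) sums (\<Sum>r. \<bar>f r\<bar> * (real j * real r + 1))"
    using summable_sums[OF f] by (simp add: on)
  then have "(\<lambda>i. \<bar>fps_spread j f $ i\<bar> * (real i + 1)) sums (\<Sum>r. \<bar>f r\<bar> * (real j * real r + 1))"
    by (subst sums_mono_reindex[OF mono, symmetric]) (auto simp: off)
  then show "weighted_summable (fps_spread j f)"
    unfolding weighted_summable_def by (rule sums_summable)
  have "summable f"
    using f by (rule summable_comparison_test[rotated]) (auto intro!: exI[of _ 0] simp: mult_le_cancel_left1)
  then have "(\<lambda>r. fps_spread j f $ (j * r)) sums (\<Sum>r. f r)"
    by (simp add: on summable_sums)
  then show "(\<lambda>i. fps_spread j f $ i) sums (\<Sum>r. f r)"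
    by (subst sums_mono_reindex[OF mono, symmetric]) (auto simp: off)
qed

lemma cycle_weight_sums: "cycle_weight t j sums exp (t / real j)"
  using exp_converges[of "t / real j"] by (simp add: cycle_weight_def [abs_def] divide_inverse mult.commute)

lemma cycle_weight_weighted_summable:
  assumes j: "j \<ge> 1"
  shows "summable (\<lambda>r. \<bar>cycle_weight t j r\<bar> * (real j * real r + 1))"
proof -
  define x where "x = 2 * \<bar>t\<bar> / real j"
  have bound: "\<bar>cycle_weight t j r\<bar> * (real j * real r + 1) \<le> real j * (x ^ r / fact r)" for r
  proof -
    have "real (r + 1) \<le> real (2 ^ r)" by (rule of_nat_mono) (simp add: Suc_leI less_exp)
    then have "real j * (real r + 1) \<le> real j * 2 ^ r" by (intro mult_left_mono) auto
    moreover have "real j * real r + 1 \<le> real j * (real r + 1)" using j by (simp add: algebra_simps)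
    ultimately have "real j * real r + 1 \<le> real j * 2 ^ r" by linarith
    then have "\<bar>cycle_weight t j r\<bar> * (real j * real r + 1) \<le> \<bar>cycle_weight t j r\<bar> * (real j * 2 ^ r)"
      by (intro mult_left_mono) auto
    also have "\<dots> = real j * (x ^ r / fact r)"
      using j by (simp add: cycle_weight_def x_def abs_mult power_abs power_divide power_mult_distrib field_simps)
    finally show ?thesis .
  qed
  have "summable (\<lambda>r. real j * (x ^ r / fact r))"
    using summable_mult[OF summable_exp[of x], of "real j"] by (simp add: divide_inverse mult.commute)
  then show ?thesis
    by (rule summable_comparison_test[rotated]) (use bound in \<open>auto intro!: exI[of _ 0]\<close>)
qed

lemma weighted_summable_spread_cycle_weight:
  assumes "j \<ge> 1"
  shows "weighted_summable (fps_spread j (cycle_weight t j)) \<and>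
         (\<lambda>i. fps_spread j (cycle_weight t j) $ i) sums exp (t / real j)"
  using weighted_summable_fps_spread[OF assms cycle_weight_weighted_summable[OF assms]]
    sums_unique[OF cycle_weight_sums] by simp

text \<open>Dominated convergence (Tannery's theorem): the coefficient ratios
  \<open>rising_coeff t (n - i) / rising_coeff t n\<close> tend to \<open>1\<close> and are \<open>O(i + 1)\<close>.\<close>
lemma fps_nth_mult_ewens_fps_limit:
  assumes t: "t > 0" and p: "weighted_summable p"
  shows "(\<lambda>n. (p * ewens_fps t n) $ n / rising_coeff t n) \<longlonglongrightarrow> (\<Sum>i. p $ i)"
proof -
  define A where "A = (\<lambda>i n. if i \<le> n then p $ i * (rising_coeff t (n - i) / rising_coeff t n) else 0)"
  define M where "M = (\<lambda>i. \<bar>p $ i\<bar> * (real i + 1) * (1 + 1 / t))"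
  have lim: "(\<lambda>n. A i n) \<longlonglongrightarrow> p $ i" for i
  proof (rule Lim_transform_eventually)
    show "(\<lambda>n. p $ i * (rising_coeff t (n - i) / rising_coeff t n)) \<longlonglongrightarrow> p $ i"
      using tendsto_mult[OF tendsto_const rising_coeff_ratio_limit[OF t]] by simp
    show "\<forall>\<^sub>F n in sequentially. p $ i * (rising_coeff t (n - i) / rising_coeff t n) = A i n"
      using eventually_ge_at_top[of i] by eventually_elim (simp add: A_def)
  qed
  have bound: "norm (A i n) \<le> M i" for i n
  proof (cases "i \<le> n")
    case True
    have "rising_coeff t (n - i) / rising_coeff t n \<le> (real i + 1) * (1 + 1 / t)"
      using rising_coeff_le_scaled[OF t, of "n - i" n] rising_coeff_pos[OF t, of n] True
      by (simp add: field_simps)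
    then have "\<bar>p $ i\<bar> * \<bar>rising_coeff t (n - i) / rising_coeff t n\<bar> \<le> \<bar>p $ i\<bar> * ((real i + 1) * (1 + 1 / t))"
      using rising_coeff_pos[OF t] by (intro mult_left_mono) (auto simp: less_imp_le)
    then show ?thesis using True by (simp add: A_def M_def abs_mult mult.assoc)
  qed (use t in \<open>simp add: A_def M_def\<close>)
  have "summable M"
    using p unfolding M_def weighted_summable_def by (rule summable_mult2)
  then have "(\<lambda>n. \<Sum>i. A i n) \<longlonglongrightarrow> (\<Sum>i. p $ i)"
    using tannerys_theorem[where a = A and F = sequentially, OF lim] bound
    by (auto intro: always_eventually)
  moreover have "(\<Sum>i. A i n) = (p * ewens_fps t n) $ n / rising_coeff t n" for n
  proof -
    have "(\<Sum>i. A i n) = (\<Sum>i=0..n. A i n)" by (rule suminf_finite) (auto simp: A_def)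
    then show ?thesis by (simp add: A_def fps_mult_nth ewens_fps_nth sum_divide_distrib)
  qed
  ultimately show ?thesis by simp
qed

section \<open>Derangements with distinct cycle lengths\<close>

definition distinct_weight :: "real \<Rightarrow> nat \<Rightarrow> nat \<Rightarrow> real" where
  "distinct_weight t j r =
     (if j = 1 then (if r = 0 then 1 else 0) else if r \<le> 1 then cycle_weight t j r else 0)"

definition cutoff_weight :: "real \<Rightarrow> nat \<Rightarrow> nat \<Rightarrow> nat \<Rightarrow> real" where
  "cutoff_weight t M j = (if j \<le> M then distinct_weight t j else cycle_weight t j)"

definition cutoff_fps :: "real \<Rightarrow> nat \<Rightarrow> nat \<Rightarrow> real fps" where
  "cutoff_fps t M N = (\<Prod>j=1..N. fps_spread j (cutoff_weight t M j))"

definition correction_fps :: "real \<Rightarrow> nat \<Rightarrow> real fps" where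
  "correction_fps t M =
     (\<Prod>j=1..M. fps_spread j (distinct_weight t j) * fps_spread j (cycle_weight (- t) j))"

definition distinct_prod :: "real \<Rightarrow> nat \<Rightarrow> real" where
  "distinct_prod t M = (\<Prod>j=2..M. exp (- t / real j) * (1 + t / real j))"

lemma cutoff_fps_eq:
  assumes "M \<le> N"
  shows "cutoff_fps t M N = correction_fps t M * ewens_fps t N"
proof -
  have split: "{1..N} = {1..M} \<union> {Suc M..N}" using assms by auto
  have "cutoff_fps t M N = (\<Prod>j=1..M. fps_spread j (distinct_weight t j)) *
                           (\<Prod>j=Suc M..N. fps_spread j (cycle_weight t j))"
    unfolding cutoff_fps_def split by (subst prod.union_disjoint) (auto simp: cutoff_weight_def)
  also have "(\<Prod>j=1..M. fps_spread j (distinct_weight t j)) =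
      correction_fps t M * (\<Prod>j=1..M. fps_spread j (cycle_weight t j))"
    unfolding correction_fps_def prod.distrib[symmetric]
  proof (intro prod.cong refl)
    fix j assume "j \<in> {1..M}"
    then show "fps_spread j (distinct_weight t j) = fps_spread j (distinct_weight t j) *
        fps_spread j (cycle_weight (- t) j) * fps_spread j (cycle_weight t j)"
      using fps_spread_cycle_weight_mult_neg[of j t] by (simp add: mult.assoc mult.commute)
  qed
  also have "\<dots> * (\<Prod>j=Suc M..N. fps_spread j (cycle_weight t j)) = correction_fps t M * ewens_fps t N"
    unfolding ewens_fps_def split by (subst prod.union_disjoint) (auto simp: mult.assoc)
  finally show ?thesis .
qed

lemma weighted_summable_spread_distinct_weight:
  assumes j: "j \<ge> 1"
  shows "weighted_summable (fps_spread j (distinct_weight t j)) \<and>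
         (\<lambda>i. fps_spread j (distinct_weight t j) $ i) sums (if j = 1 then 1 else 1 + t / real j)"
proof -
  have "(\<Sum>r\<in>{0, 1}. distinct_weight t j r) = (if j = 1 then 1 else 1 + t / real j)"
    by (simp add: distinct_weight_def cycle_weight_def)
  then have sums: "distinct_weight t j sums (if j = 1 then 1 else 1 + t / real j)"
    using sums_finite[of "{0, 1}" "distinct_weight t j"] by (auto simp: distinct_weight_def)
  have "summable (\<lambda>r. \<bar>distinct_weight t j r\<bar> * (real j * real r + 1))"
    by (rule summable_finite[of "{0, 1}"]) (auto simp: distinct_weight_def)
  from weighted_summable_fps_spread[OF j this] show ?thesis
    unfolding sums_unique[OF sums, symmetric] .
qed

lemma correction_fps_sums:
  assumes "M \<ge> 1"
  shows "weighted_summable (correction_fps t M) \<and>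
         (\<lambda>i. correction_fps t M $ i) sums (exp (- t) * distinct_prod t M)"
proof -
  define s where "s = (\<lambda>j. (if j = 1 then 1 else 1 + t / real j) * exp (- t / real j))"
  have "weighted_summable (correction_fps t M) \<and> (\<lambda>i. correction_fps t M $ i) sums (\<Prod>j=1..M. s j)"
    unfolding correction_fps_def
  proof (intro weighted_summable_prod)
    fix j assume "j \<in> {1..M}"
    then show "weighted_summable (fps_spread j (distinct_weight t j) * fps_spread j (cycle_weight (- t) j)) \<and>
        (\<lambda>i. (fps_spread j (distinct_weight t j) * fps_spread j (cycle_weight (- t) j)) $ i) sums s j"
      using weighted_summable_spread_distinct_weight[of j t] weighted_summable_spread_cycle_weight[of j "- t"]
        weighted_summable_mult[of "fps_spread j (distinct_weight t j)"]
        weighted_summable_sums_mult[of "fps_spread j (distinct_weight t j)"]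
      by (simp add: s_def)
  qed simp
  moreover have "{1..M} = insert 1 {2..M}" using assms by auto
  then have "(\<Prod>j=1..M. s j) = exp (- t) * distinct_prod t M"
    by (simp add: s_def distinct_prod_def prod.distrib mult_ac)
  ultimately show ?thesis by simp
qed

lemma cutoff_fps_nth_limit:
  assumes t: "t > 0" and M: "M \<ge> 1"
  shows "(\<lambda>n. cutoff_fps t M n $ n / rising_coeff t n) \<longlonglongrightarrow> exp (- t) * distinct_prod t M"
proof (rule Lim_transform_eventually)
  show "(\<lambda>n. (correction_fps t M * ewens_fps t n) $ n / rising_coeff t n) \<longlonglongrightarrow> exp (- t) * distinct_prod t M"
    using correction_fps_sums[OF M, of t] fps_nth_mult_ewens_fps_limit[OF t] sums_unique by metis
  show "\<forall>\<^sub>F n in sequentially. (correction_fps t M * ewens_fps t n) $ n / rising_coeff t n =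
      cutoff_fps t M n $ n / rising_coeff t n"
    using eventually_ge_at_top[of M] by eventually_elim (simp add: cutoff_fps_eq)
qed

lemma prod_cutoff_weight:
  assumes M: "1 \<le> M" "M \<le> n"
  shows "(\<Prod>j=1..n. cutoff_weight t M j (c j)) =
         (if c 1 = 0 \<and> (\<forall>j\<in>{2..M}. c j \<le> 1) then \<Prod>j=1..n. cycle_weight t j (c j) else 0)"
proof (cases "c 1 = 0 \<and> (\<forall>j\<in>{2..M}. c j \<le> 1)")
  case True
  then have "cutoff_weight t M j (c j) = cycle_weight t j (c j)" for j
    by (cases "j = 1") (auto simp: cutoff_weight_def distinct_weight_def cycle_weight_def)
  then show ?thesis using True by simp
next
  case False
  obtain j where "j \<in> {1..M}" "cutoff_weight t M j (c j) = 0"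
  proof (cases "c 1 = 0")
    case True
    with False obtain j where "j \<in> {2..M}" "\<not> c j \<le> 1" by auto
    then show ?thesis using that[of j] by (auto simp: cutoff_weight_def distinct_weight_def)
  next
    case False
    then show ?thesis using that[of 1] M by (auto simp: cutoff_weight_def distinct_weight_def)
  qed
  then have "(\<Prod>j=1..n. cutoff_weight t M j (c j)) = 0" using M by (intro prod_zero) auto
  then show ?thesis by (simp only: if_not_P[OF False])
qed

lemma esf_event_eq_cutoff_fps:
  assumes M: "1 \<le> M" "M \<le> n"
    and Q: "\<And>c. c \<in> cyc_vecs n \<Longrightarrow> Q c \<longleftrightarrow> c 1 = 0 \<and> (\<forall>j\<in>{2..M}. c j \<le> 1)"
  shows "esf_event t n Q = fact n / pochhammer t n * cutoff_fps t M n $ n"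
proof -
  have "esf_event t n Q = fact n / pochhammer t n *
      (\<Sum>c\<in>{c\<in>cyc_vecs n. Q c}. \<Prod>j=1..n. cycle_weight t j (c j))"
    by (simp add: esf_event_def esf_prob_def cycle_weight_def sum_distrib_left)
  also have "(\<Sum>c\<in>{c\<in>cyc_vecs n. Q c}. \<Prod>j=1..n. cycle_weight t j (c j)) =
      (\<Sum>c\<in>cyc_vecs n. if Q c then \<Prod>j=1..n. cycle_weight t j (c j) else 0)"
    by (rule sum.inter_filter) (simp add: cyc_vecs_eq_count_vecs)
  also have "(\<Sum>c\<in>cyc_vecs n. if Q c then \<Prod>j=1..n. cycle_weight t j (c j) else 0) =
      (\<Sum>c\<in>count_vecs n n. \<Prod>j=1..n. cutoff_weight t M j (c j))"
    using Q prod_cutoff_weight[OF M] unfolding cyc_vecs_eq_count_vecs by (intro sum.cong) auto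
  also have "\<dots> = cutoff_fps t M n $ n"
    unfolding cutoff_fps_def by (rule sum_count_vecs_prod)
  finally show ?thesis .
qed

lemma derange_prob_distinct_eq:
  assumes t: "t > 0" and n: "n \<ge> 1"
  shows "derange_prob t n (\<lambda>c. D_tilde n c = 0) = cutoff_fps t n n $ n / cutoff_fps t 1 n $ n"
proof -
  have "pochhammer t n \<noteq> 0" using t by (simp add: pochhammer_pos less_imp_neq[symmetric])
  moreover have "esf_event t n (\<lambda>c. c 1 = 0 \<and> D_tilde n c = 0) =
      fact n / pochhammer t n * cutoff_fps t n n $ n"
    using n by (intro esf_event_eq_cutoff_fps) (auto simp: D_tilde_def)
  moreover have "esf_event t n (\<lambda>c. c 1 = 0) = fact n / pochhammer t n * cutoff_fps t 1 n $ n"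
    using n by (intro esf_event_eq_cutoff_fps) auto
  ultimately show ?thesis by (simp add: derange_prob_def)
qed

section \<open>Coefficientwise comparison\<close>

definition fps_coeffs_le :: "real fps \<Rightarrow> real fps \<Rightarrow> bool" where
  "fps_coeffs_le p q \<longleftrightarrow> (\<forall>i. p $ i \<le> q $ i)"

lemma fps_coeffs_le_trans [trans]: "fps_coeffs_le p q \<Longrightarrow> fps_coeffs_le q r \<Longrightarrow> fps_coeffs_le p r"
  by (auto simp: fps_coeffs_le_def intro: order_trans)

lemma fps_coeffs_le_add:
  "fps_coeffs_le p p' \<Longrightarrow> fps_coeffs_le q q' \<Longrightarrow> fps_coeffs_le (p + q) (p' + q')"
  by (auto simp: fps_coeffs_le_def intro: add_mono)

lemma fps_coeffs_le_mult_right: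
  "fps_coeffs_le p q \<Longrightarrow> fps_coeffs_le 0 r \<Longrightarrow> fps_coeffs_le (p * r) (q * r)"
  unfolding fps_coeffs_le_def fps_mult_nth by (auto intro!: sum_mono mult_right_mono)

lemma fps_coeffs_le_mult_left:
  "fps_coeffs_le p q \<Longrightarrow> fps_coeffs_le 0 r \<Longrightarrow> fps_coeffs_le (r * p) (r * q)"
  using fps_coeffs_le_mult_right by (simp add: mult.commute)

lemma fps_coeffs_nonneg_mult: "fps_coeffs_le 0 p \<Longrightarrow> fps_coeffs_le 0 q \<Longrightarrow> fps_coeffs_le 0 (p * q)"
  using fps_coeffs_le_mult_right[of 0 p q] by simp

lemma fps_coeffs_le_mult:
  assumes "fps_coeffs_le 0 p" "fps_coeffs_le p p'" "fps_coeffs_le 0 q" "fps_coeffs_le q q'"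
  shows "fps_coeffs_le (p * q) (p' * q')"
  using fps_coeffs_le_mult_right[OF assms(2,3)] fps_coeffs_le_mult_left[OF assms(4)]
    fps_coeffs_le_trans[OF assms(1,2)]
  by (blast intro: fps_coeffs_le_trans)

lemma fps_coeffs_le_prod:
  assumes "\<And>j. j \<in> A \<Longrightarrow> fps_coeffs_le 0 (F j) \<and> fps_coeffs_le (F j) (G j)"
  shows "fps_coeffs_le 0 (\<Prod>j\<in>A. F j) \<and> fps_coeffs_le (\<Prod>j\<in>A. F j) (\<Prod>j\<in>A. G j)"
  using assms
proof (induction A rule: infinite_finite_induct)
  case (insert j A)
  then show ?case by (auto intro: fps_coeffs_nonneg_mult fps_coeffs_le_mult)
qed (auto simp: fps_coeffs_le_def)

lemma fps_coeffs_le_fps_spread: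
  "(\<And>r. f r \<le> g r) \<Longrightarrow> fps_coeffs_le (fps_spread j f) (fps_spread j g)"
  by (simp add: fps_coeffs_le_def fps_spread_nth)

lemma fps_coeffs_nonneg_fps_spread: "(\<And>r. 0 \<le> f r) \<Longrightarrow> fps_coeffs_le 0 (fps_spread j f)"
  by (simp add: fps_coeffs_le_def fps_spread_nth)

lemma cycle_weight_nonneg: "t \<ge> 0 \<Longrightarrow> 0 \<le> cycle_weight t j r"
  by (simp add: cycle_weight_def)

lemma distinct_weight_nonneg: "t \<ge> 0 \<Longrightarrow> 0 \<le> distinct_weight t j r"
  by (simp add: distinct_weight_def cycle_weight_def)

lemma distinct_weight_le_cycle_weight: "t \<ge> 0 \<Longrightarrow> distinct_weight t j r \<le> cycle_weight t j r"
  by (simp add: distinct_weight_def cycle_weight_def)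

lemma cutoff_weight_nonneg: "t \<ge> 0 \<Longrightarrow> 0 \<le> cutoff_weight t M j r"
  by (simp add: cutoff_weight_def distinct_weight_nonneg cycle_weight_nonneg)

lemma cutoff_weight_le_cycle_weight: "t \<ge> 0 \<Longrightarrow> cutoff_weight t M j r \<le> cycle_weight t j r"
  by (simp add: cutoff_weight_def distinct_weight_le_cycle_weight)

lemma distinct_weight_le_cutoff_weight: "t \<ge> 0 \<Longrightarrow> distinct_weight t j r \<le> cutoff_weight t M j r"
  by (simp add: cutoff_weight_def distinct_weight_le_cycle_weight)

definition tail_const :: "real \<Rightarrow> nat \<Rightarrow> real" where
  "tail_const t k = (t / real k) ^ 2 / 2"

lemma cycle_weight_le_tail_const:
  assumes "t \<ge> 0" "r \<ge> 2"
  shows "cycle_weight t j r \<le> tail_const t j * cycle_weight t j (r - 2)"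
proof -
  obtain q where r: "r = q + 2" using assms(2) by (metis add.commute le_Suc_ex)
  have "(2::real) * 1 \<le> real (q + 2) * real (q + 1)" by (intro mult_mono) auto
  then have "2 * (fact q :: real) \<le> real (q + 2) * real (q + 1) * fact q"
    by (intro mult_right_mono) auto
  also have "\<dots> = fact (q + 2)" by (simp add: algebra_simps)
  finally have "(t / real j) ^ (q + 2) / fact (q + 2) \<le> (t / real j) ^ (q + 2) / (2 * fact q)"
    using assms(1) by (intro divide_left_mono) auto
  then show ?thesis
    by (simp add: r tail_const_def cycle_weight_def power_add power2_eq_square field_simps)
qed

lemma fps_spread_cycle_weight_minus_distinct_le:
  assumes t: "t \<ge> 0" and j: "j \<ge> 2"
  shows "fps_coeffs_le (fps_spread j (cycle_weight t j) - fps_spread j (distinct_weight t j))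
           (fps_const (tail_const t j) * fps_X ^ (2 * j) * fps_spread j (cycle_weight t j))"
  unfolding fps_coeffs_le_def
proof
  fix m
  have rhs: "(fps_const (tail_const t j) * fps_X ^ (2 * j) * fps_spread j (cycle_weight t j)) $ m =
      tail_const t j * (if m < 2 * j then 0 else fps_spread j (cycle_weight t j) $ (m - 2 * j))"
    by (simp add: fps_X_power_mult_nth mult.assoc)
  show "(fps_spread j (cycle_weight t j) - fps_spread j (distinct_weight t j)) $ m
      \<le> (fps_const (tail_const t j) * fps_X ^ (2 * j) * fps_spread j (cycle_weight t j)) $ m"
  proof (cases "j dvd m \<and> m div j \<ge> 2")
    case True
    then obtain r where r: "m = j * r" "r \<ge> 2" using j by (auto elim!: dvdE)
    have "\<not> m < 2 * j" using r by (metis mult.commute mult_le_mono2 not_le)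
    moreover have "m - 2 * j = j * (r - 2)" using r by (simp add: right_diff_distrib')
    ultimately show ?thesis
      unfolding rhs using r j cycle_weight_le_tail_const[OF t r(2), of j]
      by (simp add: fps_spread_nth distinct_weight_def)
  next
    case False
    then have "(fps_spread j (cycle_weight t j) - fps_spread j (distinct_weight t j)) $ m = 0"
      using j by (auto simp: fps_spread_nth distinct_weight_def)
    moreover have "0 \<le> tail_const t j * (if m < 2 * j then 0 else fps_spread j (cycle_weight t j) $ (m - 2 * j))"
      using t by (simp add: fps_spread_nth cycle_weight_nonneg tail_const_def)
    ultimately show ?thesis unfolding rhs by simp
  qed
qed

definition distinct_fps :: "real \<Rightarrow> nat \<Rightarrow> real fps" where
  "distinct_fps t N = (\<Prod>j=1..N. fps_spread j (distinct_weight t j))"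

definition tail_majorant :: "real \<Rightarrow> nat \<Rightarrow> nat \<Rightarrow> real fps" where
  "tail_majorant t M N =
     (\<Sum>k\<in>{Suc M..N}. fps_const (tail_const t k) * fps_X ^ (2 * k)) * ewens_fps t N"

lemma cutoff_fps_diag: "cutoff_fps t N N = distinct_fps t N"
  by (simp add: cutoff_fps_def distinct_fps_def cutoff_weight_def)

lemma fps_coeffs_le_distinct_fps_ewens_fps:
  "t \<ge> 0 \<Longrightarrow> fps_coeffs_le 0 (distinct_fps t N) \<and> fps_coeffs_le (distinct_fps t N) (ewens_fps t N)"
  unfolding distinct_fps_def ewens_fps_def
  by (intro fps_coeffs_le_prod conjI fps_coeffs_nonneg_fps_spread fps_coeffs_le_fps_spread
      distinct_weight_nonneg distinct_weight_le_cycle_weight)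

lemma fps_coeffs_nonneg_ewens_fps: "t \<ge> 0 \<Longrightarrow> fps_coeffs_le 0 (ewens_fps t N)"
  using fps_coeffs_le_distinct_fps_ewens_fps fps_coeffs_le_trans by blast

lemma fps_coeffs_le_distinct_fps_cutoff_fps:
  "t \<ge> 0 \<Longrightarrow> fps_coeffs_le (distinct_fps t N) (cutoff_fps t M N)"
  unfolding distinct_fps_def cutoff_fps_def
  using fps_coeffs_le_prod[of "{1..N}" "\<lambda>j. fps_spread j (distinct_weight t j)"]
  by (simp add: fps_coeffs_nonneg_fps_spread fps_coeffs_le_fps_spread
      distinct_weight_nonneg distinct_weight_le_cutoff_weight)

lemma fps_coeffs_nonneg_tail_majorant: "t \<ge> 0 \<Longrightarrow> fps_coeffs_le 0 (tail_majorant t M N)"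
  unfolding tail_majorant_def
  by (intro fps_coeffs_nonneg_mult fps_coeffs_nonneg_ewens_fps)
    (auto simp: fps_coeffs_le_def fps_sum_nth tail_const_def intro!: sum_nonneg)

lemma tail_majorant_Suc:
  fixes t :: real and M N :: nat
  defines "W \<equiv> fps_spread (Suc N) (cycle_weight t (Suc N))"
  shows "tail_majorant t M (Suc N) = tail_majorant t M N * W +
           (if Suc N \<le> M then 0
            else ewens_fps t N * (fps_const (tail_const t (Suc N)) * fps_X ^ (2 * Suc N) * W))"
proof -
  have E: "ewens_fps t (Suc N) = ewens_fps t N * W" by (simp add: ewens_fps_def W_def)
  show ?thesis
  proof (cases "Suc N \<le> M")
    case True
    then have "{Suc M..Suc N} = {Suc M..N}" by auto
    then show ?thesis using True by (simp only: tail_majorant_def E mult.assoc if_True add_0_right)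
  next
    case False
    then have "(\<Sum>k\<in>{Suc M..Suc N}. fps_const (tail_const t k) * fps_X ^ (2 * k)) =
        (\<Sum>k\<in>{Suc M..N}. fps_const (tail_const t k) * fps_X ^ (2 * k)) +
        fps_const (tail_const t (Suc N)) * fps_X ^ (2 * Suc N)"
      by simp
    then show ?thesis using False by (simp add: tail_majorant_def E algebra_simps)
  qed
qed

text \<open>Replacing the factors \<open>j > M\<close> of the cutoff series one at a time by their restricted versions
  changes it by at most \<open>tail_const t j * X ^ (2 * j)\<close> times the full series.\<close>
lemma cutoff_fps_minus_distinct_fps_le:
  assumes t: "t \<ge> 0" and M: "M \<ge> 1"
  shows "fps_coeffs_le (cutoff_fps t M N - distinct_fps t N) (tail_majorant t M N)"
proof (induction N)
  case 0
  then show ?case by (simp add: cutoff_fps_def distinct_fps_def tail_majorant_def fps_coeffs_le_def)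
next
  case (Suc N)
  define j where "j = Suc N"
  define H where "H = fps_spread j (distinct_weight t j)"
  define C where "C = fps_spread j (cutoff_weight t M j)"
  define W where "W = fps_spread j (cycle_weight t j)"
  have step: "cutoff_fps t M j - distinct_fps t j =
      (cutoff_fps t M N - distinct_fps t N) * C + distinct_fps t N * (C - H)"
    by (simp add: cutoff_fps_def distinct_fps_def C_def H_def j_def algebra_simps)
  have "fps_coeffs_le 0 C"
    using t by (simp add: C_def fps_coeffs_nonneg_fps_spread cutoff_weight_nonneg)
  with Suc.IH have "fps_coeffs_le ((cutoff_fps t M N - distinct_fps t N) * C) (tail_majorant t M N * C)"
    by (rule fps_coeffs_le_mult_right)
  also have "fps_coeffs_le \<dots> (tail_majorant t M N * W)"
    using t by (intro fps_coeffs_le_mult_left fps_coeffs_nonneg_tail_majorant)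
      (simp add: C_def W_def fps_coeffs_le_fps_spread cutoff_weight_le_cycle_weight)
  finally have old: "fps_coeffs_le ((cutoff_fps t M N - distinct_fps t N) * C) (tail_majorant t M N * W)" .
  show ?case
  proof (cases "j \<le> M")
    case True
    then have "C = H" by (simp add: C_def H_def cutoff_weight_def)
    then show ?thesis using old True tail_majorant_Suc[where t = t and M = M and N = N]
      unfolding j_def[symmetric] W_def[symmetric] step by simp
  next
    case False
    then have "C = W" by (simp add: C_def W_def cutoff_weight_def)
    have "fps_coeffs_le (distinct_fps t N * (W - H))
        (ewens_fps t N * (fps_const (tail_const t j) * fps_X ^ (2 * j) * W))"
      using fps_coeffs_le_distinct_fps_ewens_fps[OF t, of N] False M t
        fps_spread_cycle_weight_minus_distinct_le[OF t, of j]
      by (intro fps_coeffs_le_mult)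
        (auto simp: W_def H_def fps_coeffs_le_def fps_spread_nth distinct_weight_le_cycle_weight)
    then show ?thesis using fps_coeffs_le_add[OF old] False \<open>C = W\<close> tail_majorant_Suc[where t = t and M = M and N = N]
      unfolding j_def[symmetric] W_def[symmetric] step by simp
  qed
qed

lemma cutoff_fps_nth_minus_distinct_bounds:
  assumes t: "t > 0" and M: "1 \<le> M" "M \<le> n"
  shows "0 \<le> cutoff_fps t M n $ n - distinct_fps t n $ n"
    and "cutoff_fps t M n $ n - distinct_fps t n $ n \<le>
           (\<Sum>k\<in>{Suc M..n}. tail_const t k * (if n < 2 * k then 0 else rising_coeff t (n - 2 * k)))"
proof -
  show "0 \<le> cutoff_fps t M n $ n - distinct_fps t n $ n"
    using fps_coeffs_le_distinct_fps_cutoff_fps[of t n M] t by (simp add: fps_coeffs_le_def)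
  have "cutoff_fps t M n $ n - distinct_fps t n $ n \<le> tail_majorant t M n $ n"
    using cutoff_fps_minus_distinct_fps_le[of t M n] t M by (simp add: fps_coeffs_le_def)
  also have "\<dots> = (\<Sum>k\<in>{Suc M..n}. tail_const t k * (if n < 2 * k then 0 else rising_coeff t (n - 2 * k)))"
    unfolding tail_majorant_def sum_distrib_right fps_sum_nth
    by (intro sum.cong refl) (simp add: mult.assoc fps_X_power_mult_nth ewens_fps_nth)
  finally show "cutoff_fps t M n $ n - distinct_fps t n $ n \<le> \<dots>" .
qed

section \<open>Tail estimates and the limit\<close>

text \<open>For \<open>4 k \<le> n\<close> the coefficient \<open>rising_coeff t (n - 2 k)\<close> is at most twice
  \<open>rising_coeff t n\<close>; for larger \<open>k\<close> the constant \<open>tail_const t k\<close> is at most \<open>8 t\<^sup>2 / n\<^sup>2\<close>.\<close>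
lemma tail_const_rising_coeff_le:
  assumes t: "t > 0" and k: "1 \<le> k" "2 * k \<le> n"
  shows "tail_const t k * rising_coeff t (n - 2 * k)
           \<le> rising_coeff t n * t\<^sup>2 / (real k)\<^sup>2 + 8 * t\<^sup>2 / (real n)\<^sup>2 * rising_coeff t (n - 2 * k)"
proof -
  have a0: "0 \<le> rising_coeff t m" for m using rising_coeff_pos[OF t, of m] by simp
  show ?thesis
  proof (cases "4 * k \<le> n")
    case True
    then have "rising_coeff t (n - 2 * k) \<le> 2 * rising_coeff t n"
      by (intro rising_coeff_le_twice t) auto
    then have "tail_const t k * rising_coeff t (n - 2 * k) \<le> tail_const t k * (2 * rising_coeff t n)"
      by (intro mult_left_mono) (simp_all add: tail_const_def)
    also have "\<dots> = rising_coeff t n * t\<^sup>2 / (real k)\<^sup>2" by (simp add: tail_const_def power_divide)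
    finally show ?thesis using a0[of "n - 2 * k"] by (simp add: add_increasing2)
  next
    case False
    then have "(real n)\<^sup>2 \<le> (4 * real k)\<^sup>2" by (intro power_mono) auto
    then have "tail_const t k \<le> 8 * t\<^sup>2 / (real n)\<^sup>2"
      using k by (simp add: tail_const_def power_divide field_simps mult_left_mono)
    then have "tail_const t k * rising_coeff t (n - 2 * k) \<le> 8 * t\<^sup>2 / (real n)\<^sup>2 * rising_coeff t (n - 2 * k)"
      by (rule mult_right_mono) (rule a0)
    then show ?thesis using a0[of n] by (simp add: add_increasing)
  qed
qed

lemma sum_inverse_square_le:
  assumes "1 \<le> M" "M \<le> n"
  shows "(\<Sum>k\<in>{Suc M..n}. 1 / (real k)\<^sup>2) \<le> 1 / real M - 1 / real n"
  using assms(2)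
proof (induction n rule: dec_induct)
  case (step n)
  have n: "real n \<ge> 1" using step.hyps assms(1) by simp
  have "1 / (real (Suc n))\<^sup>2 \<le> 1 / (real n * real (Suc n))"
    using n by (intro divide_left_mono) (auto simp: power2_eq_square)
  also have "\<dots> = 1 / real n - 1 / real (Suc n)" using n by (simp add: field_simps)
  finally show ?case using step.IH step.hyps by simp
qed simp

lemma sum_shifted_rising_coeff_le:
  assumes t: "t > 0"
  shows "(\<Sum>k\<in>{Suc M..n}. if n < 2 * k then 0 else rising_coeff t (n - 2 * k))
           \<le> rising_coeff t n * (t + real n) / t"
proof -
  define K where "K = {k\<in>{Suc M..n}. \<not> n < 2 * k}"
  have "(\<Sum>k\<in>{Suc M..n}. if n < 2 * k then 0 else rising_coeff t (n - 2 * k)) =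
      (\<Sum>k\<in>K. rising_coeff t (n - 2 * k))"
    unfolding K_def by (subst sum.inter_filter) (auto intro!: sum.cong)
  also have "\<dots> = (\<Sum>m\<in>(\<lambda>k. n - 2 * k) ` K. rising_coeff t m)"
    by (subst sum.reindex) (auto simp: K_def inj_on_def)
  also have "\<dots> \<le> (\<Sum>m=0..n. rising_coeff t m)"
    using rising_coeff_pos[OF t] by (intro sum_mono2) (auto simp: less_imp_le)
  also have "\<dots> = rising_coeff t n * (t + real n) / t" by (rule sum_rising_coeff[OF t])
  finally show ?thesis .
qed

lemma tail_sum_le:
  assumes t: "t > 0" and M: "1 \<le> M" "M \<le> n"
  shows "(\<Sum>k\<in>{Suc M..n}. tail_const t k * (if n < 2 * k then 0 else rising_coeff t (n - 2 * k)))
         \<le> rising_coeff t n * (t\<^sup>2 / real M + 8 * t * (t + 1) / real n)"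
proof -
  define X where "X = (\<lambda>k. if n < 2 * k then 0 else rising_coeff t (n - 2 * k))"
  have n: "real n \<ge> 1" using M by simp
  have an: "rising_coeff t n > 0" by (rule rising_coeff_pos[OF t])
  have "(\<Sum>k\<in>{Suc M..n}. tail_const t k * X k)
      \<le> (\<Sum>k\<in>{Suc M..n}. rising_coeff t n * t\<^sup>2 * (1 / (real k)\<^sup>2) + 8 * t\<^sup>2 / (real n)\<^sup>2 * X k)"
  proof (intro sum_mono)
    fix k assume "k \<in> {Suc M..n}"
    then show "tail_const t k * X k \<le> rising_coeff t n * t\<^sup>2 * (1 / (real k)\<^sup>2) + 8 * t\<^sup>2 / (real n)\<^sup>2 * X k"
      using tail_const_rising_coeff_le[OF t, of k n] an by (auto simp: X_def)
  qed
  also have "\<dots> = rising_coeff t n * t\<^sup>2 * (\<Sum>k\<in>{Suc M..n}. 1 / (real k)\<^sup>2) +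
      8 * t\<^sup>2 / (real n)\<^sup>2 * (\<Sum>k\<in>{Suc M..n}. X k)"
    by (simp add: sum.distrib sum_distrib_left)
  also have "\<dots> \<le> rising_coeff t n * t\<^sup>2 * (1 / real M) +
      8 * t\<^sup>2 / (real n)\<^sup>2 * (rising_coeff t n * (t + real n) / t)"
  proof (intro add_mono mult_left_mono)
    show "(\<Sum>k\<in>{Suc M..n}. 1 / (real k)\<^sup>2) \<le> 1 / real M"
      using sum_inverse_square_le[OF M] n by (smt (verit) divide_nonneg_nonneg)
    show "(\<Sum>k\<in>{Suc M..n}. X k) \<le> rising_coeff t n * (t + real n) / t"
      unfolding X_def by (rule sum_shifted_rising_coeff_le[OF t])
  qed (use an in auto)
  also have "8 * t\<^sup>2 / (real n)\<^sup>2 * (rising_coeff t n * (t + real n) / t)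
      = rising_coeff t n * (8 * t * (t + real n) / (real n)\<^sup>2)"
    using t n by (simp add: field_simps power2_eq_square)
  also have "8 * t * (t + real n) / (real n)\<^sup>2 \<le> 8 * t * (t + 1) / real n"
    using t n by (simp add: field_simps power2_eq_square mult_left_mono)
  finally show ?thesis using an by (simp add: X_def algebra_simps)
qed

lemma tendsto_of_approximations:
  fixes x :: "nat \<Rightarrow> real" and y :: "nat \<Rightarrow> nat \<Rightarrow> real"
  assumes y: "\<And>M. M \<ge> 1 \<Longrightarrow> y M \<longlonglongrightarrow> Y M" and Y: "Y \<longlonglongrightarrow> L"
    and e: "e \<longlonglongrightarrow> 0" and d: "d \<longlonglongrightarrow> 0"
    and approx: "\<And>M n. 1 \<le> M \<Longrightarrow> M \<le> n \<Longrightarrow> \<bar>x n - y M n\<bar> \<le> e M + d n"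
  shows "x \<longlonglongrightarrow> L"
proof (rule tendstoI)
  fix r :: real assume "r > 0"
  then have r: "r / 4 > 0" by simp
  have "\<forall>\<^sub>F M in sequentially. dist (Y M) L < r / 4 \<and> e M < r / 4 \<and> 1 \<le> M"
    using tendstoD[OF Y r] order_tendstoD(2)[OF e r] eventually_ge_at_top[of 1]
    by eventually_elim auto
  then obtain M where M: "dist (Y M) L < r / 4" "e M < r / 4" "1 \<le> M"
    by (auto simp: eventually_sequentially)
  have "\<forall>\<^sub>F n in sequentially. dist (y M n) (Y M) < r / 4 \<and> d n < r / 4 \<and> M \<le> n"
    using tendstoD[OF y[OF M(3)] r] order_tendstoD(2)[OF d r] eventually_ge_at_top[of M]
    by eventually_elim auto
  then show "\<forall>\<^sub>F n in sequentially. dist (x n) L < r"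
  proof eventually_elim
    case (elim n)
    then have "\<bar>x n - y M n\<bar> < r / 2" using approx[OF M(3)] M(2) by fastforce
    then show ?case using elim M(1) unfolding dist_real_def by arith
  qed
qed

lemma distinct_prod_limit:
  assumes t: "t > 0"
  shows "distinct_prod t \<longlonglongrightarrow> exp (- t * (euler_mascheroni - 1)) / Gamma (t + 2)"
proof -
  define C where "C = exp (- euler_mascheroni * t) / (t * (1 + t) * exp (- t))"
  have pos: "1 + t / real k > 0" for k using t by (simp add: add_pos_nonneg)
  have eq: "distinct_prod t M = C / Gamma_series_Weierstrass t M" if "M \<ge> 1" for M
  proof -
    have "(\<Prod>k=1..M. exp (t / real k) / (1 + t / real k)) =
        (\<Prod>k=1..M. inverse (exp (- t / real k) * (1 + t / real k)))"
      by (intro prod.cong refl) (simp add: exp_minus field_simps)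
    also have "\<dots> = inverse (\<Prod>k=1..M. exp (- t / real k) * (1 + t / real k))"
      using prod_inversef[of "\<lambda>k. exp (- t / real k) * (1 + t / real k)" "{1..M}"] by (simp add: o_def)
    also have "{1..M} = insert 1 {2..M}" using that by auto
    then have "(\<Prod>k=1..M. exp (- t / real k) * (1 + t / real k)) = exp (- t) * (1 + t) * distinct_prod t M"
      by (simp add: distinct_prod_def)
    finally have "Gamma_series_Weierstrass t M =
        exp (- euler_mascheroni * t) / (t * (1 + t) * exp (- t) * distinct_prod t M)"
      by (simp add: Gamma_series_Weierstrass_def divide_inverse mult_ac)
    moreover have "distinct_prod t M \<noteq> 0" "t * (1 + t) * exp (- t) \<noteq> 0"
      unfolding distinct_prod_def using pos t by (auto simp: add_pos_nonneg less_imp_neq[symmetric])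
    ultimately show ?thesis
      unfolding C_def by simp
  qed
  have "\<forall>\<^sub>F M in sequentially. C / Gamma_series_Weierstrass t M = distinct_prod t M"
    using eventually_ge_at_top[of 1] by eventually_elim (simp add: eq)
  moreover have "(\<lambda>M. C / Gamma_series_Weierstrass t M) \<longlonglongrightarrow> C / Gamma t"
    using t by (intro tendsto_intros Gamma_Weierstrass_real) (simp add: less_imp_neq[symmetric])
  ultimately have "distinct_prod t \<longlonglongrightarrow> C / Gamma t" by (rule Lim_transform_eventually[rotated])
  moreover have "Gamma (t + 2) = (t + 1) * t * Gamma t"
  proof -
    have "x \<notin> \<int>\<^sub>\<le>\<^sub>0" if "x > 0" for x :: real using that nonpos_Ints_nonpos by force
    then show ?thesis
      using Gamma_plus1[of "t + 1"] Gamma_plus1[of t] t by (simp add: add.assoc)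
  qed
  ultimately show ?thesis
    using t by (simp add: C_def exp_diff exp_minus field_simps exp_add[symmetric] algebra_simps)
qed

lemma distinct_fps_nth_limit:
  assumes t: "t > 0"
  shows "(\<lambda>n. distinct_fps t n $ n / rising_coeff t n)
           \<longlonglongrightarrow> exp (- t) * (exp (- t * (euler_mascheroni - 1)) / Gamma (t + 2))"
proof (rule tendsto_of_approximations[where y = "\<lambda>M n. cutoff_fps t M n $ n / rising_coeff t n"
      and Y = "\<lambda>M. exp (- t) * distinct_prod t M"
      and e = "\<lambda>M. t\<^sup>2 / real M" and d = "\<lambda>n. 8 * t * (t + 1) / real n"])
  show "(\<lambda>M. exp (- t) * distinct_prod t M) \<longlonglongrightarrow> exp (- t) * (exp (- t * (euler_mascheroni - 1)) / Gamma (t + 2))"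
    by (intro tendsto_mult tendsto_const distinct_prod_limit t)
  show "(\<lambda>M. t\<^sup>2 / real M) \<longlonglongrightarrow> 0" "(\<lambda>n. 8 * t * (t + 1) / real n) \<longlonglongrightarrow> 0"
    by (rule lim_const_over_n)+
  fix M n :: nat assume M: "1 \<le> M" "M \<le> n"
  define a where "a = rising_coeff t n"
  define B where "B = t\<^sup>2 / real M + 8 * t * (t + 1) / real n"
  have a: "a > 0" unfolding a_def by (rule rising_coeff_pos[OF t])
  have lower: "0 \<le> cutoff_fps t M n $ n - distinct_fps t n $ n"
    and upper: "cutoff_fps t M n $ n - distinct_fps t n $ n \<le> a * B"
    using cutoff_fps_nth_minus_distinct_bounds[OF t M] tail_sum_le[OF t M]
    unfolding a_def B_def by auto
  have "distinct_fps t n $ n / a - cutoff_fps t M n $ n / a = - ((cutoff_fps t M n $ n - distinct_fps t n $ n) / a)"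
    by (simp add: diff_divide_distrib)
  then have "\<bar>distinct_fps t n $ n / a - cutoff_fps t M n $ n / a\<bar> = (cutoff_fps t M n $ n - distinct_fps t n $ n) / a"
    using lower a by simp
  also have "\<dots> \<le> B" using upper a by (simp add: pos_divide_le_eq mult.commute)
  finally show "\<bar>distinct_fps t n $ n / rising_coeff t n - cutoff_fps t M n $ n / rising_coeff t n\<bar>
      \<le> t\<^sup>2 / real M + 8 * t * (t + 1) / real n"
    by (simp add: a_def B_def)
qed (rule cutoff_fps_nth_limit[OF t])

theorem mainTheorem13:
  fixes \<theta> :: real
  assumes "\<theta> > 0"
  shows "(\<lambda>n. derange_prob \<theta> n (\<lambda>c. D_tilde n c = 0))
           \<longlonglongrightarrow> exp (- \<theta> * (euler_mascheroni - 1)) / Gamma (\<theta> + 2)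
       \<and> (\<lambda>N. \<Prod>j=2..N. exp (- \<theta> / real j) * (1 + \<theta> / real j))
           \<longlonglongrightarrow> exp (- \<theta> * (euler_mascheroni - 1)) / Gamma (\<theta> + 2)"
proof
  define L where "L = exp (- \<theta> * (euler_mascheroni - 1)) / Gamma (\<theta> + 2)"
  have "(\<lambda>n. (distinct_fps \<theta> n $ n / rising_coeff \<theta> n) / (cutoff_fps \<theta> 1 n $ n / rising_coeff \<theta> n))
          \<longlonglongrightarrow> (exp (- \<theta>) * L) / exp (- \<theta>)"
    using distinct_fps_nth_limit[OF assms] cutoff_fps_nth_limit[OF assms, of 1]
    unfolding L_def by (intro tendsto_divide) (auto simp: distinct_prod_def)
  moreover have "\<forall>\<^sub>F n in sequentially.
      (distinct_fps \<theta> n $ n / rising_coeff \<theta> n) / (cutoff_fps \<theta> 1 n $ n / rising_coeff \<theta> n)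
        = derange_prob \<theta> n (\<lambda>c. D_tilde n c = 0)"
    using eventually_ge_at_top[of 1]
  proof eventually_elim
    case (elim n)
    then show ?case using rising_coeff_pos[OF assms, of n]
      by (simp add: derange_prob_distinct_eq[OF assms] cutoff_fps_diag)
  qed
  ultimately show "(\<lambda>n. derange_prob \<theta> n (\<lambda>c. D_tilde n c = 0)) \<longlonglongrightarrow> L"
    by (simp add: Lim_transform_eventually)
  show "(\<lambda>N. \<Prod>j=2..N. exp (- \<theta> / real j) * (1 + \<theta> / real j)) \<longlonglongrightarrow> L"
    using distinct_prod_limit[OF assms] by (simp add: L_def distinct_prod_def [abs_def])
qed

end
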